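(* Let $\gamma$ be a gauge on $\mathbb{R}^d$ with skewness $\sigma$ and $(D,w)$ a finite positively weighted set with total weight $w_D$. If $a\in\mathrm{CL}_\gamma(D,w)$, then $\mathrm{FW}_\gamma\big((D,w)+(a,w_D/\sigma)\big)=\{a\}$.
   Context: A gauge $\gamma$ on $\mathbb{R}^d$ is the Minkowski functional of a convex compact set $B_\gamma$ with the origin in its interior (not necessarily symmetric); its skewness is $\sigma=\sup_{x\ne0}\gamma(x)/\gamma(-x)$. $\mathrm{FW}_\gamma(S,u)$ is the set of minimizers of $x\mapsto\sum_{s\in S}u_s\gamma(x-s)$. $(D,w)+(C,v)$ denotes $D\cup C$ with weights added at common points; $(a,t)$ denotes the single point $a$ with weight $t$. The contamination locus is $\mathrm{CL}_\gamma(D,w)=\bigcup\mathrm{FW}_\gamma((D,w)+(C,v))$, the union over all nonempty finite positively weighted sets $(C,v)$ with $\sigma v_C<w_D$. *)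

theory Defs
  imports "HOL-Analysis.Analysis"
begin

definition gauge_set :: "'a::euclidean_space set \<Rightarrow> bool" where
  "gauge_set B \<longleftrightarrow> convex B \<and> compact B \<and> 0 \<in> interior B"

definition minkowski_gauge :: "'a::euclidean_space set \<Rightarrow> 'a \<Rightarrow> real" where
  "minkowski_gauge B x = Inf {t. 0 \<le> t \<and> x \<in> (\<lambda>y. t *\<^sub>R y) ` B}"

definition skewness :: "('a::euclidean_space \<Rightarrow> real) \<Rightarrow> real" where
  "skewness \<gamma> = Sup {\<gamma> x / \<gamma> (- x) | x. x \<noteq> 0}"

definition FW :: "('a::euclidean_space \<Rightarrow> real) \<Rightarrow> 'a set \<Rightarrow> ('a \<Rightarrow> real) \<Rightarrow> 'a set" where
  "FW \<gamma> S u = {x. \<forall>y. (\<Sum>s\<in>S. u s * \<gamma> (x - s)) \<le> (\<Sum>s\<in>S. u s * \<gamma> (y - s))}"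

definition wadd :: "'a set \<times> ('a \<Rightarrow> real) \<Rightarrow> 'a set \<times> ('a \<Rightarrow> real) \<Rightarrow> 'a set \<times> ('a \<Rightarrow> real)" where
  "wadd Dw Cv = (fst Dw \<union> fst Cv,
     \<lambda>x. (if x \<in> fst Dw then snd Dw x else 0) + (if x \<in> fst Cv then snd Cv x else 0))"

definition CL :: "('a::euclidean_space \<Rightarrow> real) \<Rightarrow> 'a set \<Rightarrow> ('a \<Rightarrow> real) \<Rightarrow> 'a set" where
  "CL \<gamma> D w = \<Union> {FW \<gamma> (fst (wadd (D, w) (C, v))) (snd (wadd (D, w) (C, v))) | C v.
      finite C \<and> C \<noteq> {} \<and> (\<forall>c\<in>C. 0 < v c) \<and> skewness \<gamma> * sum v C < sum w D}"

end

theory Submission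
  imports Defs
begin

(* If a minimizes the objective of the contaminated set (D,w)+(C,v), then for y \<noteq> a the triangle
   inequality \<gamma>(y - c) \<le> \<gamma>(y - a) + \<gamma>(a - c) bounds the D-part of the objective at a by its value
   at y plus v_C \<gamma>(y - a). As \<sigma> v_C < w_D, the weight w_D/\<sigma> put on a strictly exceeds v_C, and
   \<gamma>(y - a) > 0, so a is the unique minimizer once that weight is added. *)

definition gauge_scalings :: "'a::euclidean_space set \<Rightarrow> 'a \<Rightarrow> real set" where
  "gauge_scalings B x = {t. 0 \<le> t \<and> x \<in> (\<lambda>y. t *\<^sub>R y) ` B}"

lemma minkowski_gauge_eq_Inf: "minkowski_gauge B x = Inf (gauge_scalings B x)"
  by (simp add: minkowski_gauge_def gauge_scalings_def)

lemma bdd_below_gauge_scalings: "bdd_below (gauge_scalings B x)"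
  unfolding gauge_scalings_def bdd_below_def by auto

lemma gauge_set_radii:
  assumes "gauge_set B"
  obtains r R where "r > 0" "cball 0 r \<subseteq> B" "R > 0" "\<forall>x\<in>B. norm x \<le> R"
proof -
  from assms have "0 \<in> interior B" "bounded B" by (auto simp: gauge_set_def compact_imp_bounded)
  then show ?thesis using that mem_interior_cball bounded_pos by metis
qed

lemma norm_div_radius_in_gauge_scalings:
  assumes "r > 0" "cball 0 r \<subseteq> B"
  shows "norm x / r \<in> gauge_scalings B x"
proof (cases "x = 0")
  case True
  then show ?thesis
    unfolding gauge_scalings_def using assms by (auto intro!: image_eqI[of _ _ 0])
next
  case False
  let ?t = "norm x / r"
  have t: "?t > 0" using False assms(1) by auto
  have "norm (x /\<^sub>R ?t) = r" using t False assms(1) by simp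
  then have "x /\<^sub>R ?t \<in> B" using assms(2) by auto
  moreover have "x = ?t *\<^sub>R (x /\<^sub>R ?t)" using t assms(1) by simp
  ultimately show ?thesis unfolding gauge_scalings_def using t by (auto intro!: image_eqI)
qed

lemma minkowski_gauge_le_norm:
  assumes "r > 0" "cball 0 r \<subseteq> B"
  shows "minkowski_gauge B x \<le> norm x / r"
  unfolding minkowski_gauge_eq_Inf
  by (rule cInf_lower[OF norm_div_radius_in_gauge_scalings[OF assms] bdd_below_gauge_scalings])

lemma norm_le_minkowski_gauge:
  assumes "r > 0" "cball 0 r \<subseteq> B" "R > 0" "\<forall>y\<in>B. norm y \<le> R"
  shows "norm x / R \<le> minkowski_gauge B x"
  unfolding minkowski_gauge_eq_Inf
proof (rule cInf_greatest)
  show "gauge_scalings B x \<noteq> {}"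
    using norm_div_radius_in_gauge_scalings[OF assms(1,2)] by blast
next
  fix t assume "t \<in> gauge_scalings B x"
  then obtain y where y: "t \<ge> 0" "y \<in> B" "x = t *\<^sub>R y" unfolding gauge_scalings_def by auto
  have "norm x = t * norm y" using y by simp
  also have "\<dots> \<le> t * R" using y assms(4) by (auto intro: mult_left_mono)
  finally show "norm x / R \<le> t" using assms(3) by (simp add: divide_le_eq)
qed

lemma minkowski_gauge_0:
  assumes "gauge_set B"
  shows "minkowski_gauge B 0 = 0"
proof -
  obtain r R where "r > 0" "cball 0 r \<subseteq> B" "R > 0" "\<forall>x\<in>B. norm x \<le> R"
    using gauge_set_radii[OF assms] .
  then show ?thesis
    using minkowski_gauge_le_norm norm_le_minkowski_gauge by (metis order_antisym norm_zero div_0)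
qed

lemma minkowski_gauge_pos:
  assumes "gauge_set B" "x \<noteq> 0"
  shows "minkowski_gauge B x > 0"
proof -
  obtain r R where "r > 0" "cball 0 r \<subseteq> B" "R > 0" "\<forall>x\<in>B. norm x \<le> R"
    using gauge_set_radii[OF assms(1)] .
  then have "norm x / R \<le> minkowski_gauge B x" by (rule norm_le_minkowski_gauge)
  moreover have "norm x / R > 0" using assms(2) \<open>R > 0\<close> by simp
  ultimately show ?thesis by linarith
qed

lemma gauge_scalings_add:
  assumes "convex B" "0 \<in> B" "s \<in> gauge_scalings B x" "t \<in> gauge_scalings B y"
  shows "s + t \<in> gauge_scalings B (x + y)"
proof -
  obtain x1 where x1: "s \<ge> 0" "x1 \<in> B" "x = s *\<^sub>R x1"
    using assms(3) by (auto simp: gauge_scalings_def)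
  obtain y1 where y1: "t \<ge> 0" "y1 \<in> B" "y = t *\<^sub>R y1"
    using assms(4) by (auto simp: gauge_scalings_def)
  show ?thesis
  proof (cases "s + t = 0")
    case True
    then have "s = 0" "t = 0" using x1 y1 by auto
    then show ?thesis
      unfolding gauge_scalings_def using x1 y1 assms(2) by (auto intro!: image_eqI[of _ _ 0])
  next
    case False
    then have st: "s + t > 0" using x1 y1 by auto
    let ?z = "(s / (s + t)) *\<^sub>R x1 + (t / (s + t)) *\<^sub>R y1"
    have "?z \<in> B"
      using assms(1) x1 y1 st unfolding convex_def by (auto simp: add_divide_distrib[symmetric])
    moreover have "x + y = (s + t) *\<^sub>R ?z"
      using st x1 y1 by (simp add: scaleR_add_right)
    ultimately show ?thesis unfolding gauge_scalings_def using st by auto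
  qed
qed

lemma minkowski_gauge_triangle:
  assumes "gauge_set B"
  shows "minkowski_gauge B (x + y) \<le> minkowski_gauge B x + minkowski_gauge B y"
proof -
  obtain r R where r: "r > 0" "cball 0 r \<subseteq> B"
    using gauge_set_radii[OF assms] by metis
  have B: "convex B" "0 \<in> B" using assms r by (auto simp: gauge_set_def)
  have ne: "gauge_scalings B z \<noteq> {}" for z
    using norm_div_radius_in_gauge_scalings[OF r] by blast
  have "minkowski_gauge B (x + y) - t \<le> minkowski_gauge B x" if t: "t \<in> gauge_scalings B y" for t
    unfolding minkowski_gauge_eq_Inf[of B x]
  proof (rule cInf_greatest[OF ne])
    fix s assume "s \<in> gauge_scalings B x"
    then have "minkowski_gauge B (x + y) \<le> s + t"
      unfolding minkowski_gauge_eq_Inf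
      using gauge_scalings_add[OF B _ t] by (intro cInf_lower bdd_below_gauge_scalings)
    then show "minkowski_gauge B (x + y) - t \<le> s" by simp
  qed
  then have "minkowski_gauge B (x + y) - minkowski_gauge B x \<le> minkowski_gauge B y"
    unfolding minkowski_gauge_eq_Inf[of B y] by (intro cInf_greatest[OF ne]) force
  then show ?thesis by simp
qed

lemma skewness_minkowski_gauge_pos:
  assumes "gauge_set B"
  shows "skewness (minkowski_gauge B) > 0"
proof -
  let ?g = "minkowski_gauge B"
  obtain r R where rR: "r > 0" "cball 0 r \<subseteq> B" "R > 0" "\<forall>x\<in>B. norm x \<le> R"
    using gauge_set_radii[OF assms] .
  have bound: "?g x / ?g (- x) \<le> R / r" if "x \<noteq> 0" for x
  proof -
    have "?g x / ?g (- x) \<le> (norm x / r) / (norm x / R)"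
      using minkowski_gauge_le_norm[OF rR(1,2), of x] norm_le_minkowski_gauge[OF rR, of "- x"]
        minkowski_gauge_pos[OF assms that] that rR(3)
      by (intro frac_le) auto
    also have "\<dots> = R / r" using that rR by (simp add: field_simps)
    finally show ?thesis .
  qed
  obtain i :: 'a where "i \<in> Basis" using nonempty_Basis by blast
  then have i: "i \<noteq> 0" by (auto simp: nonzero_Basis)
  have "bdd_above {?g x / ?g (- x) | x. x \<noteq> 0}" unfolding bdd_above_def using bound by blast
  then have "?g i / ?g (- i) \<le> skewness ?g"
    unfolding skewness_def using i by (intro cSup_upper) auto
  moreover have "?g i / ?g (- i) > 0"
    using minkowski_gauge_pos[OF assms] i by simp
  ultimately show ?thesis by linarith
qed

lemma sum_wadd:
  assumes "finite D" "finite C"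
  shows "(\<Sum>s\<in>fst (wadd (D, w) (C, v)). snd (wadd (D, w) (C, v)) s * h s)
       = (\<Sum>s\<in>D. w s * h s) + (\<Sum>s\<in>C. v s * h s)"
proof -
  have "(\<Sum>s\<in>fst (wadd (D, w) (C, v)). snd (wadd (D, w) (C, v)) s * h s)
     = (\<Sum>s\<in>D \<union> C. if s \<in> D then w s * h s else 0) + (\<Sum>s\<in>D \<union> C. if s \<in> C then v s * h s else 0)"
    unfolding wadd_def sum.distrib[symmetric] by (intro sum.cong) (auto simp: distrib_right)
  also have "\<dots> = (\<Sum>s\<in>D. w s * h s) + (\<Sum>s\<in>C. v s * h s)"
    using assms by (simp add: sum.If_cases Int_absorb1 Int_absorb2)
  finally show ?thesis .
qed

lemma FW_eq_singleton_iff: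
  "FW \<gamma> S u = {a} \<longleftrightarrow>
     (\<forall>y. y \<noteq> a \<longrightarrow> (\<Sum>s\<in>S. u s * \<gamma> (a - s)) < (\<Sum>s\<in>S. u s * \<gamma> (y - s)))"
  (is "_ \<longleftrightarrow> (\<forall>y. y \<noteq> a \<longrightarrow> ?f a < ?f y)")
proof
  assume FW: "FW \<gamma> S u = {a}"
  show "\<forall>y. y \<noteq> a \<longrightarrow> ?f a < ?f y"
  proof (intro allI impI)
    fix y assume "y \<noteq> a"
    then have "y \<notin> FW \<gamma> S u" using FW by simp
    then obtain z where "?f z < ?f y" unfolding FW_def by (auto simp: not_le)
    moreover have "?f a \<le> ?f z" using FW unfolding FW_def by blast
    ultimately show "?f a < ?f y" by linarith
  qed
next
  assume strict: "\<forall>y. y \<noteq> a \<longrightarrow> ?f a < ?f y"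
  then have "?f a \<le> ?f y" for y by (cases "y = a") (auto simp: less_imp_le)
  then have "a \<in> FW \<gamma> S u" unfolding FW_def by blast
  moreover have "x = a" if "x \<in> FW \<gamma> S u" for x
  proof (rule ccontr)
    assume "x \<noteq> a"
    then have "?f a < ?f x" using strict by blast
    moreover have "?f x \<le> ?f a" using that unfolding FW_def by blast
    ultimately show False by simp
  qed
  ultimately show "FW \<gamma> S u = {a}" by blast
qed

lemma contamination_weight_beats_minimizer:
  fixes \<gamma> :: "'a::ab_group_add \<Rightarrow> real"
  assumes triangle: "\<And>x y. \<gamma> (x + y) \<le> \<gamma> x + \<gamma> y"
    and "\<gamma> (y - a) > 0"
    and "finite C" "\<forall>c\<in>C. 0 \<le> v c" "sum v C < k"
    and minimal: "F a + (\<Sum>c\<in>C. v c * \<gamma> (a - c)) \<le> F y + (\<Sum>c\<in>C. v c * \<gamma> (y - c))"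
  shows "F a < F y + k * \<gamma> (y - a)"
proof -
  have "(\<Sum>c\<in>C. v c * \<gamma> (y - c)) \<le> (\<Sum>c\<in>C. v c * \<gamma> (y - a) + v c * \<gamma> (a - c))"
  proof (rule sum_mono)
    fix c assume "c \<in> C"
    have "\<gamma> (y - c) \<le> \<gamma> (y - a) + \<gamma> (a - c)" using triangle[of "y - a" "a - c"] by simp
    then show "v c * \<gamma> (y - c) \<le> v c * \<gamma> (y - a) + v c * \<gamma> (a - c)"
      using assms(4) \<open>c \<in> C\<close> by (simp add: distrib_left[symmetric] mult_left_mono)
  qed
  with minimal have "F a \<le> F y + sum v C * \<gamma> (y - a)"
    by (simp add: sum.distrib sum_distrib_right)
  also have "\<dots> < F y + k * \<gamma> (y - a)"
    using assms(2,5) by simp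
  finally show ?thesis .
qed

theorem mainTheorem20:
  fixes B :: "'a::euclidean_space set" and D :: "'a set" and w :: "'a \<Rightarrow> real" and a :: 'a
  assumes "gauge_set B"
    and "finite D" and "\<forall>x\<in>D. 0 < w x"
    and "a \<in> CL (minkowski_gauge B) D w"
  shows "FW (minkowski_gauge B)
           (fst (wadd (D, w) ({a}, \<lambda>_. sum w D / skewness (minkowski_gauge B))))
           (snd (wadd (D, w) ({a}, \<lambda>_. sum w D / skewness (minkowski_gauge B)))) = {a}"
proof -
  let ?g = "minkowski_gauge B"
  let ?k = "sum w D / skewness ?g"
  define F where "F x = (\<Sum>s\<in>D. w s * ?g (x - s))" for x
  from assms(4) obtain C v where C: "finite C" "\<forall>c\<in>C. 0 < v c" "skewness ?g * sum v C < sum w D"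
    and minimal: "a \<in> FW ?g (fst (wadd (D, w) (C, v))) (snd (wadd (D, w) (C, v)))"
    unfolding CL_def by blast
  have "sum v C < ?k"
    using C(3) skewness_minkowski_gauge_pos[OF assms(1)] by (simp add: field_simps mult.commute)
  then have "F a < F y + ?k * ?g (y - a)" if "y \<noteq> a" for y
    using minimal C(1,2) minkowski_gauge_pos[OF assms(1)] that
    by (intro contamination_weight_beats_minimizer[where C = C and v = v])
      (auto simp: minkowski_gauge_triangle[OF assms(1)] FW_def F_def sum_wadd[OF assms(2)]
        less_imp_le)
  then show ?thesis
    unfolding FW_eq_singleton_iff sum_wadd[OF assms(2) finite.insertI[OF finite.emptyI]]
    by (simp add: F_def minkowski_gauge_0[OF assms(1)])
qed

end
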